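(* Let $n\ge5$ and let $\mathcal{W}=\mathcal{W}_1\cup\mathcal{W}_2\subset(\mathbb{R}^{4n})^{\otimes5}$ be the set defined below. Then the tensors in $\mathcal{W}$ are linearly independent. Moreover, if $\mathcal{T}_1\in\operatorname{Span}\mathcal{W}_1$ and $\mathcal{T}_2\in\operatorname{Span}\mathcal{W}_2$ satisfy $\mathcal{T}_1+\mathcal{T}_2=0$, then $\mathcal{T}_1=\mathcal{T}_2=0$.
   Context: All tensors are real. The set $\mathcal{W}$: for $i\in\{1,\dots,n\}$ let $\alpha_i\in\mathbb{R}^{2n}$ have entries $1$ at positions $2i-1,2i$ and $0$ elsewhere; $(a|b)\in\mathbb{R}^{4n}$ is concatenation. With $1\le i_1<i_2<i_3<i_4\le n$ and $1\le k_1<k_2\le n$ ranging over all choices, let $U$ be the set of vectors of the 16 types: $(\alpha_{i_1}+\alpha_{i_2}+\alpha_{i_3}+\alpha_{i_4}|0)$, $(\alpha_{i_1}+\alpha_{i_2}+\alpha_{i_3}|0)$, $(\alpha_{i_1}+\alpha_{i_2}|0)$, $(\alpha_{i_1}|0)$, $(\alpha_{i_1}+\alpha_{i_2}+\alpha_{i_3}+\alpha_{i_4}|\alpha_{k_1})$, $(\alpha_{i_1}+\alpha_{i_2}|\tfrac{(n-2)^2}{(n-3)(n-1)}\alpha_{k_1})$, $(\alpha_{i_1}|\tfrac{n-2}{n-3}\alpha_{k_1})$, $(\alpha_{i_1}|\tfrac{n-1}{n-4}\alpha_{k_1})$, $(\alpha_{i_1}+\alpha_{i_2}+\alpha_{i_3}|\alpha_{k_1}+\alpha_{k_2})$,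 $(\alpha_{i_1}+\alpha_{i_2}|\tfrac{n-2}{n-3}(\alpha_{k_1}+\alpha_{k_2}))$, $(\alpha_{i_1}+\alpha_{i_2}|\tfrac{n-2}{n-4}\alpha_{k_1})$, $(0|\alpha_{k_1})$, $(\alpha_{i_1}+\alpha_{i_2}+\alpha_{i_3}|\tfrac{n-3}{n-4}\alpha_{k_1})$, $(\alpha_{i_1}+\alpha_{i_2}+\alpha_{i_3}|\tfrac{n-2}{n-1}\alpha_{k_1})$, $(\alpha_{i_1}|\tfrac{n-1}{n-3}(\alpha_{k_1}+\alpha_{k_2}))$, $(0|\alpha_{k_1}+\alpha_{k_2})$ (types with only $i_1$ or only $k_1$ omit the other indices; $k_1$ alone ranges over $\{1,\dots,n\}$). Let $\pi(a_1,\dots,a_{2n},b_1,\dots,b_{2n})=(b_2,\dots,b_{2n},b_1,a_2,\dots,a_{2n},a_1)$. Set $\mathcal{W}_1=\{u^{\otimes5}:u\in U\}$, $\mathcal{W}_2=\{(\pi u)^{\otimes5}:u\in U\}$, $\mathcal{W}=\mathcal{W}_1\cup\mathcal{W}_2$; linear independence means the tensors $u^{\otimes5}$, $(\pi u)^{\otimes 5}$, $u\in U$, are linearly independent in $(\mathbb{R}^{4n})^{\otimes5}$. *)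

theory Defs
  imports Main "HOL.Real"
begin

text \<open>Vectors of R^m are modelled as functions nat => real with 1-based indices
  1..m (value 0 outside). Tensors in (R^(4n))^(tensor 5) are functions on 5-tuples of indices.\<close>

definition alpha :: "nat \<Rightarrow> nat \<Rightarrow> real" where
  "alpha i = (\<lambda>j. if j = 2*i - 1 \<or> j = 2*i then 1 else 0)"

definition asum :: "nat set \<Rightarrow> nat \<Rightarrow> real" where
  "asum S = (\<lambda>j. \<Sum>i\<in>S. alpha i j)"

definition scl :: "real \<Rightarrow> (nat \<Rightarrow> real) \<Rightarrow> nat \<Rightarrow> real" where
  "scl c v = (\<lambda>j. c * v j)"

definition zvec :: "nat \<Rightarrow> real" where
  "zvec = (\<lambda>j. 0)"

definition cat :: "nat \<Rightarrow> (nat \<Rightarrow> real) \<Rightarrow> (nat \<Rightarrow> real) \<Rightarrow> nat \<Rightarrow> real" where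
  "cat n a b = (\<lambda>j. if 1 \<le> j \<and> j \<le> 2*n then a j
                    else if 2*n < j \<and> j \<le> 4*n then b (j - 2*n) else 0)"

definition Uset :: "nat \<Rightarrow> (nat \<Rightarrow> real) set" where
  "Uset n = (let r = real n in
     {cat n (asum {i1,i2,i3,i4}) zvec | i1 i2 i3 i4. 1 \<le> i1 \<and> i1 < i2 \<and> i2 < i3 \<and> i3 < i4 \<and> i4 \<le> n}
   \<union> {cat n (asum {i1,i2,i3}) zvec | i1 i2 i3. 1 \<le> i1 \<and> i1 < i2 \<and> i2 < i3 \<and> i3 \<le> n}
   \<union> {cat n (asum {i1,i2}) zvec | i1 i2. 1 \<le> i1 \<and> i1 < i2 \<and> i2 \<le> n}
   \<union> {cat n (alpha i1) zvec | i1. 1 \<le> i1 \<and> i1 \<le> n}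
   \<union> {cat n (asum {i1,i2,i3,i4}) (alpha k1) | i1 i2 i3 i4 k1.
        1 \<le> i1 \<and> i1 < i2 \<and> i2 < i3 \<and> i3 < i4 \<and> i4 \<le> n \<and> 1 \<le> k1 \<and> k1 \<le> n}
   \<union> {cat n (asum {i1,i2}) (scl ((r-2)^2 / ((r-3)*(r-1))) (alpha k1)) | i1 i2 k1.
        1 \<le> i1 \<and> i1 < i2 \<and> i2 \<le> n \<and> 1 \<le> k1 \<and> k1 \<le> n}
   \<union> {cat n (alpha i1) (scl ((r-2)/(r-3)) (alpha k1)) | i1 k1.
        1 \<le> i1 \<and> i1 \<le> n \<and> 1 \<le> k1 \<and> k1 \<le> n}
   \<union> {cat n (alpha i1) (scl ((r-1)/(r-4)) (alpha k1)) | i1 k1.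
        1 \<le> i1 \<and> i1 \<le> n \<and> 1 \<le> k1 \<and> k1 \<le> n}
   \<union> {cat n (asum {i1,i2,i3}) (asum {k1,k2}) | i1 i2 i3 k1 k2.
        1 \<le> i1 \<and> i1 < i2 \<and> i2 < i3 \<and> i3 \<le> n \<and> 1 \<le> k1 \<and> k1 < k2 \<and> k2 \<le> n}
   \<union> {cat n (asum {i1,i2}) (scl ((r-2)/(r-3)) (asum {k1,k2})) | i1 i2 k1 k2.
        1 \<le> i1 \<and> i1 < i2 \<and> i2 \<le> n \<and> 1 \<le> k1 \<and> k1 < k2 \<and> k2 \<le> n}
   \<union> {cat n (asum {i1,i2}) (scl ((r-2)/(r-4)) (alpha k1)) | i1 i2 k1.
        1 \<le> i1 \<and> i1 < i2 \<and> i2 \<le> n \<and> 1 \<le> k1 \<and> k1 \<le> n}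
   \<union> {cat n zvec (alpha k1) | k1. 1 \<le> k1 \<and> k1 \<le> n}
   \<union> {cat n (asum {i1,i2,i3}) (scl ((r-3)/(r-4)) (alpha k1)) | i1 i2 i3 k1.
        1 \<le> i1 \<and> i1 < i2 \<and> i2 < i3 \<and> i3 \<le> n \<and> 1 \<le> k1 \<and> k1 \<le> n}
   \<union> {cat n (asum {i1,i2,i3}) (scl ((r-2)/(r-1)) (alpha k1)) | i1 i2 i3 k1.
        1 \<le> i1 \<and> i1 < i2 \<and> i2 < i3 \<and> i3 \<le> n \<and> 1 \<le> k1 \<and> k1 \<le> n}
   \<union> {cat n (alpha i1) (scl ((r-1)/(r-3)) (asum {k1,k2})) | i1 k1 k2.
        1 \<le> i1 \<and> i1 \<le> n \<and> 1 \<le> k1 \<and> k1 < k2 \<and> k2 \<le> n}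
   \<union> {cat n zvec (asum {k1,k2}) | k1 k2. 1 \<le> k1 \<and> k1 < k2 \<and> k2 \<le> n})"

text \<open>Index map of pi: pi(a_1..a_2n, b_1..b_2n) = (b_2,...,b_2n,b_1,a_2,...,a_2n,a_1).\<close>
definition pidx :: "nat \<Rightarrow> nat \<Rightarrow> nat" where
  "pidx n j = (if j < 2*n then 2*n + j + 1
               else if j = 2*n then 2*n + 1
               else if j < 4*n then j - 2*n + 1
               else 1)"

definition piv :: "nat \<Rightarrow> (nat \<Rightarrow> real) \<Rightarrow> nat \<Rightarrow> real" where
  "piv n v = (\<lambda>j. if 1 \<le> j \<and> j \<le> 4*n then v (pidx n j) else 0)"

definition tensor5 :: "(nat \<Rightarrow> real) \<Rightarrow> nat \<times> nat \<times> nat \<times> nat \<times> nat \<Rightarrow> real" where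
  "tensor5 v = (\<lambda>(a,b,c,d,e). v a * v b * v c * v d * v e)"

end

theory Submission
  imports Defs
begin

text \<open>Every vector of \<open>U\<close> is constant on each coordinate pair \<open>{2i-1, 2i}\<close> and is determined by a
  triple \<open>(A, K, L)\<close>: the pairs filled in the first block, those filled in the second block, and the
  scale of the second block. The entry of \<open>\<Sum>\<^sub>u c(u) u\<^sup>\<otimes>\<^sup>5\<close> at a tuple drawing \<open>5 - e\<close> indices
  from the pairs \<open>A\<^sub>0\<close> of the first block and \<open>e\<close> from the pairs \<open>K\<^sub>0\<close> of the second is the moment
  \<open>\<Sum> c(A, K, L) L\<^sup>e\<close> over all \<open>A \<supseteq> A\<^sub>0\<close>, \<open>K \<supseteq> K\<^sub>0\<close>. These moments form a triangular
  system, and where two scales share the same \<open>(A, K)\<close> two consecutive exponents separate them.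
  The same argument applies to \<open>\<pi>U\<close>, whose vectors are constant on the pairs \<open>{2j, 2j+1}\<close>.

  If \<open>T\<^sub>1 = -T\<^sub>2\<close>, then \<open>T\<^sub>1\<close> is invariant under moving an index inside an odd pair (by its own
  structure) and inside an even pair (by that of \<open>T\<^sub>2\<close>), so it only depends on the half in which each
  index lies. At a representative tuple whose five indices lie in five distinct pairs, all vectors of
  one of the two families vanish, since their second blocks cover at most two pairs.\<close>

definition uvec :: "nat \<Rightarrow> nat set \<times> nat set \<times> real \<Rightarrow> nat \<Rightarrow> real" where
  "uvec n = (\<lambda>(A, K, L). cat n (asum A) (scl L (asum K)))"

lemma asum_apply:
  assumes "finite A" "1 \<le> j"
  shows "asum A j = of_bool ((j + 1) div 2 \<in> A)"
proof -
  have "alpha i j = (if i = (j + 1) div 2 then 1 else 0)" for i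
    using assms(2) unfolding alpha_def by (auto; presburger)
  then show ?thesis
    using assms(1) by (simp add: asum_def)
qed

lemma uvec_first_block:
  assumes "finite A" "i \<in> {1..n}" "j = 2*i - 1 \<or> j = 2*i"
  shows "uvec n (A, K, L) j = of_bool (i \<in> A)"
proof -
  have "1 \<le> j" "j \<le> 2*n" "(j + 1) div 2 = i"
    using assms(2,3) by auto
  then show ?thesis
    using assms(1) by (simp add: uvec_def cat_def asum_apply)
qed

lemma uvec_second_block:
  assumes "finite K" "k \<in> {1..n}" "j = 2*n + 2*k - 1 \<or> j = 2*n + 2*k"
  shows "uvec n (A, K, L) j = L * of_bool (k \<in> K)"
proof -
  have "2*n < j" "j \<le> 4*n" "1 \<le> j - 2*n" "(j - 2*n + 1) div 2 = k"
    using assms(2,3) by auto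
  then show ?thesis
    using assms(1) by (simp add: uvec_def cat_def scl_def asum_apply)
qed

lemma uvec_outside: "j = 0 \<or> 4*n < j \<Longrightarrow> uvec n t j = 0"
  by (cases t) (auto simp: uvec_def cat_def)

lemma uvec_pairs:
  assumes "finite A" "finite K" "odd j" "j < 4*n"
  shows "uvec n (A, K, L) j = uvec n (A, K, L) (Suc j)"
proof -
  obtain i where j: "j = 2*i + 1"
    using assms(3) by (rule oddE)
  show ?thesis
  proof (cases "j < 2*n")
    case True
    then have "Suc i \<in> {1..n}" "j = 2 * Suc i - 1" "Suc j = 2 * Suc i"
      using j by auto
    then show ?thesis
      using uvec_first_block[OF assms(1)] by metis
  next
    case False
    then have "Suc i - n \<in> {1..n}" "j = 2*n + 2 * (Suc i - n) - 1" "Suc j = 2*n + 2 * (Suc i - n)"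
      using j assms(4) by auto
    then show ?thesis
      using uvec_second_block[OF assms(2)] by metis
  qed
qed

lemma piv_first_block: "k \<in> {1..n} \<Longrightarrow> piv n u (2*k - 1) = u (2*n + 2*k)"
  by (auto simp: piv_def pidx_def)

lemma piv_second_block: "i \<in> {1..n} \<Longrightarrow> piv n u (2*n + 2*i - 1) = u (2*i)"
  by (auto simp: piv_def pidx_def)

lemma piv_pairs:
  assumes pairs: "\<And>j. odd j \<Longrightarrow> j < 4*n \<Longrightarrow> u j = u (Suc j)"
    and j: "even j" "2 \<le> j" "j \<noteq> 2*n" "j < 4*n"
  shows "piv n u j = piv n u (Suc j)"
proof -
  have "Suc j < 4*n"
    using j by presburger
  have "pidx n (Suc j) = Suc (pidx n j) \<and> odd (pidx n j) \<and> pidx n j < 4*n"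
  proof (cases "j < 2*n")
    case True
    then have "Suc j < 2*n"
      using j by presburger
    then show ?thesis
      using True j by (simp add: pidx_def)
  next
    case False
    then have "odd (j - 2*n + 1)"
      using j by presburger
    then show ?thesis
      using False j \<open>Suc j < 4*n\<close> by (simp add: pidx_def) arith
  qed
  then show ?thesis
    using pairs j(2) \<open>Suc j < 4*n\<close> by (simp add: piv_def)
qed

section \<open>Parametrisation of the vectors\<close>

text \<open>\<open>scales n a k\<close> is the set of scalars \<open>L\<close> for which \<open>(asum A | L \<cdot> asum K)\<close>
  with \<open>|A| = a\<close>, \<open>|K| = k\<close> is one of the sixteen types.\<close>

definition scales :: "nat \<Rightarrow> nat \<Rightarrow> nat \<Rightarrow> real set" where
  "scales n a k = (let r = real n in
    if k = 0 then (if 1 \<le> a \<and> a \<le> 4 then {1} else {})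
    else if a = 4 \<and> k = 1 then {1}
    else if a = 2 \<and> k = 1 then {(r-2)^2 / ((r-3)*(r-1)), (r-2)/(r-4)}
    else if a = 1 \<and> k = 1 then {(r-2)/(r-3), (r-1)/(r-4)}
    else if a = 3 \<and> k = 2 then {1}
    else if a = 2 \<and> k = 2 then {(r-2)/(r-3)}
    else if a = 0 \<and> k = 1 then {1}
    else if a = 3 \<and> k = 1 then {(r-3)/(r-4), (r-2)/(r-1)}
    else if a = 1 \<and> k = 2 then {(r-1)/(r-3)}
    else if a = 0 \<and> k = 2 then {1}
    else {})"

definition params :: "nat \<Rightarrow> (nat set \<times> nat set \<times> real) set" where
  "params n = {(A, K, L). A \<subseteq> {1..n} \<and> K \<subseteq> {1..n} \<and> L \<in> scales n (card A) (card K)}"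

lemma scales_bounds:
  assumes "n \<ge> 5" "L \<in> scales n a k"
  shows "a + k \<le> 5" "a \<noteq> 0 \<or> k \<noteq> 0" "k \<le> 2" "if k = 0 then L = 1 else L \<noteq> 0"
  using assms unfolding scales_def Let_def by (auto split: if_splits)

lemma card_scales: "card (scales n a k) \<le> 2"
  unfolding scales_def Let_def by (auto simp: card_insert_if)

lemma card_scales_eq_2: "card (scales n a k) = 2 \<Longrightarrow> a \<noteq> 0 \<and> a + k \<le> 4"
  unfolding scales_def Let_def by (auto split: if_splits)

lemma finite_params: "finite (params n)"
proof -
  have "params n \<subseteq> Pow {1..n} \<times> Pow {1..n} \<times> (\<Union>a\<le>n. \<Union>k\<le>n. scales n a k)"
  proof
    fix t
    assume "t \<in> params n"
    then obtain A K L where t: "t = (A, K, L)"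
      and "A \<subseteq> {1..n}" "K \<subseteq> {1..n}" "L \<in> scales n (card A) (card K)"
      by (auto simp: params_def)
    moreover have "card A \<le> n" "card K \<le> n"
      using card_mono[OF _ \<open>A \<subseteq> {1..n}\<close>] card_mono[OF _ \<open>K \<subseteq> {1..n}\<close>] by simp_all
    ultimately show "t \<in> Pow {1..n} \<times> Pow {1..n} \<times> (\<Union>a\<le>n. \<Union>k\<le>n. scales n a k)"
      unfolding t by blast
  qed
  moreover have "finite (scales n a k)" for a k
    by (simp add: scales_def Let_def)
  ultimately show ?thesis
    by (auto intro: finite_subset)
qed

lemma Uset_subset_params: "Uset n \<subseteq> uvec n ` params n"
proof -
  have alpha: "alpha i = asum {i}" for i
    by (simp add: asum_def)
  have zvec: "zvec = asum {}"
    by (simp add: asum_def zvec_def)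
  have unscaled: "cat n (asum A) (asum K) = uvec n (A, K, 1)" for A K
    by (simp add: uvec_def scl_def)
  have scaled: "cat n (asum A) (scl L (asum K)) = uvec n (A, K, L)" for A K L
    by (simp add: uvec_def)
  have mem: "uvec n (A, K, L) \<in> uvec n ` params n"
    if "A \<subseteq> {1..n}" "K \<subseteq> {1..n}" "L \<in> scales n (card A) (card K)" for A K L
    using that by (auto simp: params_def)
  show ?thesis
    unfolding Uset_def Let_def alpha zvec unscaled scaled
    by (intro Un_least; clarify; rule mem; simp add: scales_def Let_def)
qed

lemma UsetE:
  assumes "u \<in> Uset n"
  obtains A K L where "(A, K, L) \<in> params n" "u = uvec n (A, K, L)"
proof -
  obtain t where "t \<in> params n" "u = uvec n t"
    using assms Uset_subset_params by blast
  then show thesis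
    using that by (cases t) simp
qed

lemma params_props:
  assumes "n \<ge> 5" "(A, K, L) \<in> params n"
  shows "A \<subseteq> {1..n}" "K \<subseteq> {1..n}" "finite A" "finite K"
    and "card A + card K \<le> 5" "A \<noteq> {} \<or> K \<noteq> {}" "card K \<le> 2"
    and "if K = {} then L = 1 else L \<noteq> 0"
proof -
  show A: "A \<subseteq> {1..n}" and K: "K \<subseteq> {1..n}"
    using assms(2) by (auto simp: params_def)
  then show "finite A" "finite K"
    by (auto intro: finite_subset)
  moreover have "L \<in> scales n (card A) (card K)"
    using assms(2) by (simp add: params_def)
  ultimately show "card A + card K \<le> 5" "A \<noteq> {} \<or> K \<noteq> {}" "card K \<le> 2"
    and "if K = {} then L = 1 else L \<noteq> 0"
    using scales_bounds[OF assms(1)] by (metis card_eq_0_iff)+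
qed

lemma params_blocks:
  assumes "n \<ge> 5" "(A, K, L) \<in> params n"
  shows "A = {i \<in> {1..n}. uvec n (A, K, L) (2*i) \<noteq> 0}"
    and "K = {k \<in> {1..n}. uvec n (A, K, L) (2*n + 2*k) \<noteq> 0}"
proof -
  note props = params_props[OF assms]
  have "uvec n (A, K, L) (2*i) = of_bool (i \<in> A)" if "i \<in> {1..n}" for i
    using uvec_first_block[OF props(3) that] by simp
  then show "A = {i \<in> {1..n}. uvec n (A, K, L) (2*i) \<noteq> 0}"
    using props(1) by auto
  have "uvec n (A, K, L) (2*n + 2*k) = L * of_bool (k \<in> K)" if "k \<in> {1..n}" for k
    using uvec_second_block[OF props(4) that] by simp
  then show "K = {k \<in> {1..n}. uvec n (A, K, L) (2*n + 2*k) \<noteq> 0}"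
    using props(2,8) by (auto split: if_splits)
qed

lemma inj_on_uvec:
  assumes "n \<ge> 5"
  shows "inj_on (uvec n) (params n)"
proof (rule inj_onI)
  fix t t'
  assume t: "t \<in> params n" and t': "t' \<in> params n" and eq: "uvec n t = uvec n t'"
  obtain A K L A' K' L' where tt: "t = (A, K, L)" "t' = (A', K', L')"
    by (cases t, cases t')
  have "A = {i \<in> {1..n}. uvec n t (2*i) \<noteq> 0}" "K = {k \<in> {1..n}. uvec n t (2*n + 2*k) \<noteq> 0}"
    using params_blocks[OF assms t[unfolded tt(1)]] unfolding tt(1) by blast+
  moreover have "A' = {i \<in> {1..n}. uvec n t' (2*i) \<noteq> 0}" "K' = {k \<in> {1..n}. uvec n t' (2*n + 2*k) \<noteq> 0}"
    using params_blocks[OF assms t'[unfolded tt(2)]] unfolding tt(2) by blast+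
  ultimately have "A = A'" "K = K'"
    using eq by simp_all
  moreover have "L = L'"
  proof (cases "K = {}")
    case True
    then show ?thesis
      using params_props(8)[OF assms] t t' \<open>K = K'\<close> unfolding tt by metis
  next
    case False
    then obtain k where "k \<in> K"
      by blast
    then have "k \<in> {1..n}"
      using params_props(2)[OF assms] t unfolding tt by blast
    then have "uvec n t (2*n + 2*k) = L" "uvec n t' (2*n + 2*k) = L'"
      using uvec_second_block params_props(4)[OF assms] t t' \<open>k \<in> K\<close> \<open>K = K'\<close>
      unfolding tt by auto
    then show ?thesis
      using eq by simp
  qed
  ultimately show "t = t'"
    unfolding tt by simp
qed

lemma card_scales_within_params:
  assumes "n \<ge> 5" "U \<subseteq> params n"
  shows "card {L. (A, K, L) \<in> U} \<le> 2"
    and "card {L. (A, K, L) \<in> U} = 2 \<Longrightarrow> A \<noteq> {} \<and> card A + card K \<le> 4"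
proof -
  have sub: "{L. (A, K, L) \<in> U} \<subseteq> scales n (card A) (card K)"
    using assms(2) by (auto simp: params_def)
  moreover have fin: "finite (scales n (card A) (card K))"
    by (simp add: scales_def Let_def)
  ultimately show "card {L. (A, K, L) \<in> U} \<le> 2"
    using card_scales[of n "card A" "card K"] card_mono[OF fin sub] by linarith
  assume two: "card {L. (A, K, L) \<in> U} = 2"
  then have "card (scales n (card A) (card K)) = 2"
    using card_mono[OF fin sub] card_scales[of n "card A" "card K"] by simp
  moreover obtain L where "(A, K, L) \<in> U"
    using two by fastforce
  then have "finite A"
    using params_props(3)[OF assms(1)] assms(2) by blast
  ultimately show "A \<noteq> {} \<and> card A + card K \<le> 4"
    using card_scales_eq_2[of n "card A" "card K"] by auto
qed

section \<open>A triangular independence criterion\<close>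

definition moment ::
    "(nat set \<times> nat set \<times> real \<Rightarrow> real) \<Rightarrow> (nat set \<times> nat set \<times> real) set \<Rightarrow> nat set \<Rightarrow> nat set \<Rightarrow> nat \<Rightarrow> real"
  where "moment c U A0 K0 e = (\<Sum>(A, K, L)\<in>U. c (A, K, L) * (of_bool (A0 \<subseteq> A \<and> K0 \<subseteq> K) * L ^ e))"

lemma moment_eq_sum_scales:
  assumes "finite U"
    and upper_zero: "\<And>A' K' L'. (A', K', L') \<in> U \<Longrightarrow> A \<subseteq> A' \<Longrightarrow> K \<subseteq> K' \<Longrightarrow> (A', K') \<noteq> (A, K) \<Longrightarrow>
      c (A', K', L') = 0"
  shows "moment c U A K e = (\<Sum>L | (A, K, L) \<in> U. c (A, K, L) * L ^ e)"
proof -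
  let ?S = "{L. (A, K, L) \<in> U}"
  let ?h = "\<lambda>(A', K', L'). c (A', K', L') * (of_bool (A \<subseteq> A' \<and> K \<subseteq> K') * L' ^ e)"
  have "moment c U A K e = sum ?h ((\<lambda>L. (A, K, L)) ` ?S)"
    unfolding moment_def
  proof (rule sum.mono_neutral_right)
    show "\<forall>t\<in>U - (\<lambda>L. (A, K, L)) ` ?S. ?h t = 0"
    proof
      fix t
      assume t: "t \<in> U - (\<lambda>L. (A, K, L)) ` ?S"
      obtain A' K' L' where t_eq: "t = (A', K', L')"
        by (cases t)
      have "(A', K') \<noteq> (A, K)"
        using t unfolding t_eq by auto
      then show "?h t = 0"
        using upper_zero[of A' K' L'] t unfolding t_eq by auto
    qed
  qed (use assms in auto)
  also have "\<dots> = (\<Sum>L\<in>?S. c (A, K, L) * L ^ e)"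
    by (subst sum.reindex) (auto simp: inj_on_def)
  finally show ?thesis .
qed

lemma power_sums_zero_imp_zero:
  fixes a :: "real \<Rightarrow> real"
  assumes "finite S" "card S \<le> 2" "0 \<notin> S"
    and sum_e: "(\<Sum>L\<in>S. a L * L ^ e) = 0"
    and sum_Suc_e: "card S = 2 \<Longrightarrow> (\<Sum>L\<in>S. a L * L ^ Suc e) = 0"
    and "L \<in> S"
  shows "a L = 0"
proof (cases "card S = 2")
  case True
  then obtain L1 L2 where S: "S = {L1, L2}" "L1 \<noteq> L2"
    by (auto simp: card_2_iff)
  have e: "a L1 * L1 ^ e + a L2 * L2 ^ e = 0" and Suc_e: "a L1 * L1 ^ e * L1 + a L2 * L2 ^ e * L2 = 0"
    using sum_e sum_Suc_e True S by (simp_all add: ac_simps)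
  have "a L1 * L1 ^ e * (L2 - L1) = L2 * (a L1 * L1 ^ e + a L2 * L2 ^ e) - (a L1 * L1 ^ e * L1 + a L2 * L2 ^ e * L2)"
    "a L2 * L2 ^ e * (L1 - L2) = L1 * (a L1 * L1 ^ e + a L2 * L2 ^ e) - (a L1 * L1 ^ e * L1 + a L2 * L2 ^ e * L2)"
    by (simp_all add: algebra_simps)
  then have "a L1 * L1 ^ e * (L2 - L1) = 0" "a L2 * L2 ^ e * (L1 - L2) = 0"
    unfolding e Suc_e by simp_all
  then show ?thesis
    using S assms(3,6) by auto
next
  case False
  then have "S = {L}"
    using assms(1,2,6) card_le_Suc0_iff_eq[OF assms(1)] by auto
  then show ?thesis
    using sum_e assms(3) by simp
qed

text \<open>Coefficients are eliminated in order of increasing rank: the moment at \<open>(A, K)\<close> involves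
  exactly the triples above \<open>(A, K)\<close>, and for \<open>K = {}\<close> these include every triple with nonempty
  second block.\<close>

lemma coeffs_zero_if_moments_zero:
  fixes U :: "(nat set \<times> nat set \<times> real) set" and D :: "nat set"
  assumes "finite U" "finite D"
    and blocks: "\<And>A K L. (A, K, L) \<in> U \<Longrightarrow> A \<subseteq> D \<and> K \<subseteq> D \<and> card A + card K \<le> 5 \<and> (A \<noteq> {} \<or> K \<noteq> {})"
    and scale: "\<And>A K L. (A, K, L) \<in> U \<Longrightarrow> if K = {} then L = 1 else L \<noteq> 0"
    and few_scales: "\<And>A K. card {L. (A, K, L) \<in> U} \<le> 2"
    and two_scales: "\<And>A K. card {L. (A, K, L) \<in> U} = 2 \<Longrightarrow> A \<noteq> {} \<and> card A + card K \<le> 4"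
    and moments: "\<And>A0 K0 e. A0 \<subseteq> D \<Longrightarrow> K0 \<subseteq> D \<Longrightarrow> card K0 \<le> e \<Longrightarrow> card A0 + e \<le> 5 \<Longrightarrow>
      A0 \<noteq> {} \<or> e = 5 \<Longrightarrow> K0 \<noteq> {} \<or> e = 0 \<Longrightarrow> moment c U A0 K0 e = 0"
    and "t \<in> U"
  shows "c t = 0"
proof -
  define rank where
    "rank = (\<lambda>(A :: nat set, K :: nat set, L :: real). (if K = {} then 10 else 0) + (5 - (card A + card K)))"
  have "c t = 0" if "t \<in> U" "rank t = m" for t m
    using that
  proof (induction m arbitrary: t rule: less_induct)
    case (less m)
    obtain A K L where t: "t = (A, K, L)"
      by (cases t)
    have tU: "(A, K, L) \<in> U"
      using less.prems t by simp
    have fin: "finite A'" "finite K'" if "(A', K', L') \<in> U" for A' K' L'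
      using blocks[OF that] \<open>finite D\<close> finite_subset by blast+
    have upper_zero: "c (A', K', L') = 0"
      if t': "(A', K', L') \<in> U" and sub: "A \<subseteq> A'" "K \<subseteq> K'" and ne: "(A', K') \<noteq> (A, K)" for A' K' L'
    proof -
      have "card A \<le> card A'" "card K \<le> card K'"
        using sub fin[OF t'] by (simp_all add: card_mono)
      moreover have "card A < card A' \<or> card K < card K'"
        using sub ne fin[OF t'] psubset_card_mono by blast
      ultimately have "card A + card K < card A' + card K'"
        by linarith
      then have "rank (A', K', L') < m"
        using less.prems(2) blocks[OF t'] sub unfolding t rank_def by auto
      then show ?thesis
        using less.IH t' by blast
    qed
    let ?S = "{L. (A, K, L) \<in> U}"
    have S: "finite ?S" "card ?S \<le> 2" "0 \<notin> ?S" "L \<in> ?S"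
      using finite_vimageI[OF \<open>finite U\<close>, of "\<lambda>L. (A, K, L)"] few_scales tU scale[of A K 0]
      by (auto simp: vimage_def inj_on_def split: if_splits)
    have power_sum: "(\<Sum>L\<in>?S. c (A, K, L) * L ^ e) = 0"
      if "card K \<le> e" "card A + e \<le> 5" "A \<noteq> {} \<or> e = 5" "K \<noteq> {} \<or> e = 0" for e
      using moments[of A K e] moment_eq_sum_scales[of U A K c, OF \<open>finite U\<close> upper_zero] blocks[OF tU] that
      by simp
    define e where "e = (if K = {} then 0 else if A = {} then 5 else card K)"
    have "c (A, K, L) = 0"
    proof (rule power_sums_zero_imp_zero[where a = "\<lambda>L. c (A, K, L)" and e = e, OF S(1-3) _ _ S(4)])
      show "(\<Sum>L\<in>?S. c (A, K, L) * L ^ e) = 0"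
        using power_sum blocks[OF tU] fin[OF tU] unfolding e_def by auto
      show "(\<Sum>L\<in>?S. c (A, K, L) * L ^ Suc e) = 0" if two: "card ?S = 2"
      proof -
        have "K \<noteq> {}"
        proof
          assume "K = {}"
          then have "?S \<subseteq> {1}"
            using scale by auto
          then show False
            using two card_mono[of "{1::real}" ?S] by simp
        qed
        then show ?thesis
          using power_sum[of "Suc (card K)"] two_scales[OF two] unfolding e_def by auto
      qed
    qed
    then show ?case
      using t by simp
  qed
  then show ?thesis
    using \<open>t \<in> U\<close> by blast
qed

definition comb_at ::
    "((nat \<Rightarrow> real) \<Rightarrow> real) \<Rightarrow> ((nat \<Rightarrow> real) \<Rightarrow> nat \<Rightarrow> real) \<Rightarrow> (nat \<Rightarrow> real) set \<Rightarrow> (nat \<Rightarrow> nat) \<Rightarrow> real"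
  where "comb_at c f V g = (\<Sum>v\<in>V. c v * (\<Prod>m<5. f v (g m)))"

definition tup :: "(nat \<Rightarrow> nat) \<Rightarrow> nat \<times> nat \<times> nat \<times> nat \<times> nat" where
  "tup g = (g 0, g 1, g 2, g 3, g 4)"

lemma surj_tup: "surj tup"
  by (rule surjI[where f = "\<lambda>(a, b, c, d, e). (!) [a, b, c, d, e]"]) (auto simp: tup_def)

lemma sum_tensor5_tup: "(\<Sum>v\<in>V. c v * tensor5 (f v) (tup g)) = comb_at c f V g"
  by (simp add: comb_at_def tensor5_def tup_def eval_nat_numeral prod.lessThan_Suc mult_ac)

lemma sum_tensor5_tup_id: "(\<Sum>v\<in>V. c v * tensor5 v (tup g)) = comb_at c id V g"
  using sum_tensor5_tup[where f = id] by simp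

lemma comb_at_cong: "(\<And>m. m < 5 \<Longrightarrow> g m = g' m) \<Longrightarrow> comb_at c f V g = comb_at c f V g'"
  unfolding comb_at_def by (intro sum.cong prod.cong) auto

lemma comb_at_upd_cong:
  assumes "\<And>v. v \<in> V \<Longrightarrow> f v j = f v j'"
  shows "comb_at c f V (g(m := j)) = comb_at c f V (g(m := j'))"
proof -
  have "f v ((g(m := j)) k) = f v ((g(m := j')) k)" if "v \<in> V" for v k
    using assms[OF that] by simp
  then show ?thesis
    unfolding comb_at_def by (intro sum.cong refl arg_cong2[where f = "(*)"] prod.cong) auto
qed

lemma comb_at_eq_0: "(\<And>v. v \<in> V \<Longrightarrow> (\<Prod>m<5. f v (g m)) = 0) \<Longrightarrow> comb_at c f V g = 0"
  unfolding comb_at_def by (simp add: sum.neutral)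

lemma prod_lessThan_length_nth: "(\<Prod>m<length ws. h (ws ! m)) = prod_list (map h ws)"
  by (induction ws) (simp_all add: prod.lessThan_Suc_shift del: prod.lessThan_Suc)

lemma prod_list_of_bool: "prod_list (map (\<lambda>i. of_bool (i \<in> A)) ys) = (of_bool (set ys \<subseteq> A) :: real)"
  by (induction ys) auto

lemma prod_list_scaled_of_bool:
  "prod_list (map (\<lambda>k. L * of_bool (k \<in> K)) zs) = (of_bool (set zs \<subseteq> K) * L ^ length zs :: real)"
  by (induction zs) auto

lemma ex_list_set_length:
  fixes S :: "'a :: linorder set"
  assumes "finite S" "card S \<le> m" "S \<noteq> {} \<or> m = 0"
  shows "\<exists>xs. set xs = S \<and> length xs = m"
proof (cases "S = {}")
  case True
  then show ?thesis
    using assms(3) by simp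
next
  case False
  then have "Min S \<in> S"
    using assms(1) by simp
  then have "set (sorted_list_of_set S @ replicate (m - card S) (Min S)) = S"
    using assms(1) by auto
  moreover have "length (sorted_list_of_set S @ replicate (m - card S) (Min S)) = m"
    using assms(1,2) by simp
  ultimately show ?thesis
    by blast
qed

section \<open>Independence of each half\<close>

lemma comb_at_eq_moment:
  fixes f :: "(nat \<Rightarrow> real) \<Rightarrow> nat \<Rightarrow> real" and p q :: "nat \<Rightarrow> nat"
  assumes first: "\<And>A K L i. (A, K, L) \<in> U \<Longrightarrow> i \<in> set ys \<Longrightarrow> f (uvec n (A, K, L)) (p i) = of_bool (i \<in> A)"
    and second: "\<And>A K L k. (A, K, L) \<in> U \<Longrightarrow> k \<in> set zs \<Longrightarrow> f (uvec n (A, K, L)) (q k) = L * of_bool (k \<in> K)"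
    and inj: "inj_on (uvec n) U" and length: "length ys + length zs = 5"
  shows "comb_at c f (uvec n ` U) ((!) (map p ys @ map q zs))
    = moment (c \<circ> uvec n) U (set ys) (set zs) (length zs)"
proof -
  let ?ws = "map p ys @ map q zs"
  have entry: "(\<Prod>m<5. f (uvec n (A, K, L)) (?ws ! m)) = of_bool (set ys \<subseteq> A \<and> set zs \<subseteq> K) * L ^ length zs"
    if "(A, K, L) \<in> U" for A K L
  proof -
    have "length ?ws = 5"
      using length by simp
    then have "(\<Prod>m<5. f (uvec n (A, K, L)) (?ws ! m)) = prod_list (map (f (uvec n (A, K, L))) ?ws)"
      using prod_lessThan_length_nth[of "f (uvec n (A, K, L))" ?ws] by simp
    also have "\<dots> = prod_list (map (\<lambda>i. of_bool (i \<in> A)) ys) * prod_list (map (\<lambda>k. L * of_bool (k \<in> K)) zs)"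
      using first second that by (auto intro!: arg_cong2[where f = "(*)"] arg_cong[where f = prod_list] map_cong)
    finally show ?thesis
      unfolding prod_list_of_bool prod_list_scaled_of_bool by simp
  qed
  have summand: "c (uvec n t) * (\<Prod>m<5. f (uvec n t) (?ws ! m))
      = (case t of (A, K, L) \<Rightarrow> c (uvec n (A, K, L)) * (of_bool (set ys \<subseteq> A \<and> set zs \<subseteq> K) * L ^ length zs))"
    if "t \<in> U" for t
    using entry that by (cases t) (simp only: case_prod_conv)
  show ?thesis
    unfolding comb_at_def moment_def sum.reindex[OF inj]
    by (rule sum.cong[OF refl]) (simp only: comp_apply summand)
qed

lemma coeffs_zero_if_comb_at_zero:
  fixes f :: "(nat \<Rightarrow> real) \<Rightarrow> nat \<Rightarrow> real" and p q :: "nat \<Rightarrow> nat"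
  assumes "n \<ge> 5"
    and first: "\<And>A K L i. (A, K, L) \<in> params n \<Longrightarrow> i \<in> {1..n} \<Longrightarrow> f (uvec n (A, K, L)) (p i) = of_bool (i \<in> A)"
    and second: "\<And>A K L k. (A, K, L) \<in> params n \<Longrightarrow> k \<in> {1..n} \<Longrightarrow>
      f (uvec n (A, K, L)) (q k) = L * of_bool (k \<in> K)"
    and zero: "\<And>g. comb_at c f (Uset n) g = 0"
    and "u \<in> Uset n"
  shows "c u = 0"
proof -
  define U where "U = {t \<in> params n. uvec n t \<in> Uset n}"
  have U: "U \<subseteq> params n" "Uset n = uvec n ` U"
    using Uset_subset_params[of n] by (auto simp: U_def)
  have inj: "inj_on (uvec n) U"
    using inj_on_uvec[OF assms(1)] U(1) by (rule inj_on_subset)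
  have moment: "moment (c \<circ> uvec n) U A0 K0 e = 0"
    if sub: "A0 \<subseteq> {1..n}" "K0 \<subseteq> {1..n}" and e: "card K0 \<le> e" "card A0 + e \<le> 5"
      and ne: "A0 \<noteq> {} \<or> e = 5" "K0 \<noteq> {} \<or> e = 0" for A0 K0 e
  proof -
    have fin: "finite A0" "finite K0"
      using sub by (auto intro: finite_subset)
    have "card A0 \<le> 5 - e" "A0 \<noteq> {} \<or> 5 - e = 0"
      using e ne by auto
    then obtain ys where ys: "set ys = A0" "length ys = 5 - e"
      using ex_list_set_length[OF fin(1)] by blast
    obtain zs where zs: "set zs = K0" "length zs = e"
      using ex_list_set_length[OF fin(2) e(1) ne(2)] by blast
    have "comb_at c f (uvec n ` U) ((!) (map p ys @ map q zs)) = moment (c \<circ> uvec n) U A0 K0 e"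
    proof -
      have "comb_at c f (uvec n ` U) ((!) (map p ys @ map q zs)) = moment (c \<circ> uvec n) U (set ys) (set zs) (length zs)"
      proof (rule comb_at_eq_moment[OF _ _ inj])
        show "f (uvec n (A, K, L)) (p i) = of_bool (i \<in> A)" if "(A, K, L) \<in> U" "i \<in> set ys" for A K L i
          using first U(1) sub ys that by blast
        show "f (uvec n (A, K, L)) (q k) = L * of_bool (k \<in> K)" if "(A, K, L) \<in> U" "k \<in> set zs" for A K L k
          using second U(1) sub zs that by blast
        show "length ys + length zs = 5"
          using ys zs e by simp
      qed
      then show ?thesis
        using ys zs by simp
    qed
    then show ?thesis
      using zero U(2) by simp
  qed
  have "(c \<circ> uvec n) t = 0" if "t \<in> U" for t
  proof (rule coeffs_zero_if_moments_zero[where D = "{1..n}", OF _ _ _ _ _ _ moment that])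
    show "finite U"
      using finite_params U(1) by (rule finite_subset[rotated])
    show "A \<subseteq> {1..n} \<and> K \<subseteq> {1..n} \<and> card A + card K \<le> 5 \<and> (A \<noteq> {} \<or> K \<noteq> {})"
      and "if K = {} then L = 1 else L \<noteq> 0" if "(A, K, L) \<in> U" for A K L
      using params_props[OF assms(1) subsetD[OF U(1) that]] by auto
    show "card {L. (A, K, L) \<in> U} \<le> 2" "card {L. (A, K, L) \<in> U} = 2 \<Longrightarrow> A \<noteq> {} \<and> card A + card K \<le> 4"
      for A K
      using card_scales_within_params[OF assms(1) U(1)] by blast+
  qed simp
  then show ?thesis
    using U(2) \<open>u \<in> Uset n\<close> by auto
qed

lemma coeffs_zero_if_comb_at_zero_first:
  assumes "n \<ge> 5" "\<And>g. comb_at c id (Uset n) g = 0" "u \<in> Uset n"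
  shows "c u = 0"
proof (rule coeffs_zero_if_comb_at_zero[OF assms(1) _ _ assms(2,3)])
  show "id (uvec n (A, K, L)) (2*i - 1) = of_bool (i \<in> A)" if "(A, K, L) \<in> params n" "i \<in> {1..n}" for A K L i
    using uvec_first_block params_props(3)[OF assms(1) that(1)] that(2) by simp
  show "id (uvec n (A, K, L)) (2*n + 2*k - 1) = L * of_bool (k \<in> K)" if "(A, K, L) \<in> params n" "k \<in> {1..n}" for A K L k
    using uvec_second_block params_props(4)[OF assms(1) that(1)] that(2) by simp
qed

lemma coeffs_zero_if_comb_at_zero_second:
  assumes "n \<ge> 5" "\<And>g. comb_at c (piv n) (Uset n) g = 0" "u \<in> Uset n"
  shows "c u = 0"
proof (rule coeffs_zero_if_comb_at_zero[OF assms(1) _ _ assms(2,3)])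
  show "piv n (uvec n (A, K, L)) (2*n + 2*i - 1) = of_bool (i \<in> A)" if "(A, K, L) \<in> params n" "i \<in> {1..n}" for A K L i
    using uvec_first_block[OF params_props(3)[OF assms(1) that(1)] that(2)] piv_second_block[OF that(2)]
    by simp
  show "piv n (uvec n (A, K, L)) (2*k - 1) = L * of_bool (k \<in> K)" if "(A, K, L) \<in> params n" "k \<in> {1..n}" for A K L k
    using uvec_second_block[OF params_props(4)[OF assms(1) that(1)] that(2)] piv_first_block[OF that(2)]
    by simp
qed

section \<open>Separation of the two halves\<close>

lemma Uset_pairs:
  assumes "u \<in> Uset n" "odd j" "j < 4*n"
  shows "u j = u (Suc j)"
proof -
  obtain A K L where t: "(A, K, L) \<in> params n" and u: "u = uvec n (A, K, L)"
    using assms(1) by (rule UsetE)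
  have "finite A" "finite K"
    using t by (auto simp: params_def intro: finite_subset)
  then show ?thesis
    using uvec_pairs assms(2,3) unfolding u by blast
qed

lemma Uset_outside: "u \<in> Uset n \<Longrightarrow> j = 0 \<or> 4*n < j \<Longrightarrow> u j = 0"
  using Uset_subset_params uvec_outside by blast

lemma eq_start_if_steps:
  assumes steps: "\<And>j. a \<le> j \<Longrightarrow> j < b \<Longrightarrow> F j = F (Suc j)" and "a \<le> j" "j \<le> b"
  shows "F j = F a"
  using assms(2,3)
proof (induction j rule: dec_induct)
  case base
  then show ?case
    by simp
next
  case (step j)
  then show ?case
    using steps[of j] by simp
qed

text \<open>Odd steps leave the first half invariant directly; even steps leave the second half invariant,
  hence also the first, which is its negative.\<close>

lemma comb_at_step:
  assumes sum_zero: "\<And>g. comb_at c1 id (Uset n) g + comb_at c2 (piv n) (Uset n) g = 0"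
    and j: "1 \<le> j" "Suc j \<le> 4*n" "j \<noteq> 2*n"
  shows "comb_at c1 id (Uset n) (g(m := j)) = comb_at c1 id (Uset n) (g(m := Suc j))"
proof (cases "odd j")
  case True
  then show ?thesis
    using Uset_pairs j by (intro comb_at_upd_cong) auto
next
  case False
  then have "2 \<le> j"
    using j(1) by presburger
  then have "comb_at c2 (piv n) (Uset n) (g(m := j)) = comb_at c2 (piv n) (Uset n) (g(m := Suc j))"
    using False j by (intro comb_at_upd_cong piv_pairs[OF Uset_pairs]) auto
  then show ?thesis
    using sum_zero[of "g(m := j)"] sum_zero[of "g(m := Suc j)"] by linarith
qed

lemma comb_at_same_side:
  assumes sum_zero: "\<And>g. comb_at c1 id (Uset n) g + comb_at c2 (piv n) (Uset n) g = 0"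
    and j: "j \<in> {1..4*n}" "j' \<in> {1..4*n}" "j \<le> 2*n \<longleftrightarrow> j' \<le> 2*n"
  shows "comb_at c1 id (Uset n) (g(m := j)) = comb_at c1 id (Uset n) (g(m := j'))"
proof -
  let ?F = "\<lambda>j. comb_at c1 id (Uset n) (g(m := j))"
  have first_half: "?F j = ?F 1" if "j \<in> {1..2*n}" for j
    by (rule eq_start_if_steps[where F = ?F and b = "2*n"]) (use comb_at_step[OF sum_zero] that in auto)
  have second_half: "?F j = ?F (2*n + 1)" if "j \<in> {2*n + 1..4*n}" for j
    by (rule eq_start_if_steps[where F = ?F and b = "4*n"]) (use comb_at_step[OF sum_zero] that in auto)
  show ?thesis
  proof (cases "j \<le> 2*n")
    case True
    then show ?thesis
      using first_half[of j] first_half[of j'] j by simp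
  next
    case False
    then show ?thesis
      using second_half[of j] second_half[of j'] j by simp
  qed
qed

lemma comb_at_same_sides:
  assumes sum_zero: "\<And>g. comb_at c1 id (Uset n) g + comb_at c2 (piv n) (Uset n) g = 0"
    and sides: "\<And>m. m < 5 \<Longrightarrow> g m \<in> {1..4*n} \<and> g' m \<in> {1..4*n} \<and> (g m \<le> 2*n \<longleftrightarrow> g' m \<le> 2*n)"
  shows "comb_at c1 id (Uset n) g = comb_at c1 id (Uset n) g'"
proof -
  define h where "h k m = (if m < k then g' m else g m)" for k m
  have "comb_at c1 id (Uset n) g = comb_at c1 id (Uset n) (h k)" if "k \<le> 5" for k
    using that
  proof (induction k)
    case 0
    then show ?case
      by (simp add: h_def)
  next
    case (Suc k)
    have hk: "(h k)(k := g k) = h k" and h_Suc: "(h k)(k := g' k) = h (Suc k)"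
      by (auto simp: h_def)
    have side: "g k \<in> {1..4*n}" "g' k \<in> {1..4*n}" "g k \<le> 2*n \<longleftrightarrow> g' k \<le> 2*n"
      using sides[of k] Suc.prems by auto
    have "comb_at c1 id (Uset n) g = comb_at c1 id (Uset n) (h k)"
      using Suc.IH Suc.prems by (metis Suc_leD)
    also have "\<dots> = comb_at c1 id (Uset n) (h (Suc k))"
      using comb_at_same_side[OF sum_zero side, of "h k" k] unfolding hk h_Suc .
    finally show ?case .
  qed
  then have "comb_at c1 id (Uset n) g = comb_at c1 id (Uset n) (h 5)"
    by blast
  also have "\<dots> = comb_at c1 id (Uset n) g'"
    by (rule comb_at_cong) (simp add: h_def)
  finally show ?thesis .
qed

definition side_tuple :: "nat \<Rightarrow> (nat \<Rightarrow> bool) \<Rightarrow> nat \<Rightarrow> nat" where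
  "side_tuple n b m = (if b m then 2*n + 2*m + 1 else 2*m + 1)"

text \<open>Slot \<open>m\<close> of a side tuple reads pair \<open>m + 1\<close>, in the second block exactly when \<open>b m\<close>.
  A vector of the first half needs these pairs in its second block, one of the second half needs
  the others in its second block, and each second block holds at most two of the five pairs.\<close>

lemma side_tuple_no_common_support:
  assumes "n \<ge> 5" "u \<in> Uset n" "v \<in> Uset n"
  shows "(\<Prod>m<5. u (side_tuple n b m)) = 0 \<or> (\<Prod>m<5. piv n v (side_tuple n b m)) = 0"
proof (rule ccontr)
  assume "\<not> ?thesis"
  then have nonzero: "u (side_tuple n b m) \<noteq> 0" "piv n v (side_tuple n b m) \<noteq> 0" if "m < 5" for m
    using that by auto
  obtain A K L where t: "(A, K, L) \<in> params n" and u: "u = uvec n (A, K, L)"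
    using assms(2) by (rule UsetE)
  obtain A' K' L' where t': "(A', K', L') \<in> params n" and v: "v = uvec n (A', K', L')"
    using assms(3) by (rule UsetE)
  have pair: "Suc m \<in> {1..n}" if "m < 5" for m
    using that assms(1) by simp
  have "Suc ` {m. m < 5 \<and> b m} \<subseteq> K"
  proof clarify
    fix m
    assume m: "m < 5" "b m"
    then have "u (side_tuple n b m) = L * of_bool (Suc m \<in> K)"
      using uvec_second_block[OF params_props(4)[OF assms(1) t] pair[OF m(1)]] unfolding u side_tuple_def
      by simp
    then show "Suc m \<in> K"
      using nonzero(1)[OF m(1)] by auto
  qed
  moreover have "Suc ` {m. m < 5 \<and> \<not> b m} \<subseteq> K'"
  proof clarify
    fix m
    assume m: "m < 5" "\<not> b m"
    then have "piv n v (side_tuple n b m) = L' * of_bool (Suc m \<in> K')"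
      using piv_first_block[OF pair[OF m(1)]] uvec_second_block[OF params_props(4)[OF assms(1) t'] pair[OF m(1)]]
      unfolding v side_tuple_def by simp
    then show "Suc m \<in> K'"
      using nonzero(2)[OF m(1)] by auto
  qed
  ultimately have "card {m. m < 5 \<and> b m} \<le> 2" "card {m. m < 5 \<and> \<not> b m} \<le> 2"
    using card_mono[OF params_props(4)[OF assms(1) t]] card_mono[OF params_props(4)[OF assms(1) t']]
      params_props(7)[OF assms(1) t] params_props(7)[OF assms(1) t'] card_image[of Suc]
    by (metis inj_Suc inj_on_subset subset_UNIV order_trans)+
  moreover have "card {m. m < 5 \<and> b m} + card {m. m < 5 \<and> \<not> b m} = 5"
  proof -
    have "{m. m < 5 \<and> b m} \<union> {m. m < 5 \<and> \<not> b m} = {..<5}"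
      by auto
    then show ?thesis
      using card_Un_disjoint[of "{m. m < 5 \<and> b m}" "{m. m < 5 \<and> \<not> b m}"] by auto
  qed
  ultimately show False
    by simp
qed

lemma comb_at_first_half_zero:
  assumes "n \<ge> 5"
    and sum_zero: "\<And>g. comb_at c1 id (Uset n) g + comb_at c2 (piv n) (Uset n) g = 0"
  shows "comb_at c1 id (Uset n) g = 0"
proof (cases "\<forall>m<5. g m \<in> {1..4*n}")
  case False
  then obtain m where "m < 5" "g m = 0 \<or> 4*n < g m"
    by force
  then have "(\<Prod>m<5. id u (g m)) = 0" if "u \<in> Uset n" for u
    using Uset_outside[OF that] by (metis finite_lessThan lessThan_iff prod_zero_iff id_apply)
  then show ?thesis
    by (rule comb_at_eq_0)
next
  case True
  define y where "y = side_tuple n (\<lambda>m. 2*n < g m)"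
  have "comb_at c1 id (Uset n) g = comb_at c1 id (Uset n) y"
    using True assms(1) by (intro comb_at_same_sides[OF sum_zero]) (auto simp: y_def side_tuple_def)
  also have "\<dots> = 0"
  proof (cases "\<forall>u\<in>Uset n. (\<Prod>m<5. u (y m)) = 0")
    case True
    then show ?thesis
      by (intro comb_at_eq_0) simp
  next
    case False
    then obtain u where "u \<in> Uset n" "(\<Prod>m<5. u (y m)) \<noteq> 0"
      by blast
    then have "(\<Prod>m<5. piv n v (y m)) = 0" if "v \<in> Uset n" for v
      using side_tuple_no_common_support[OF assms(1) _ that] unfolding y_def by blast
    then have "comb_at c2 (piv n) (Uset n) y = 0"
      by (rule comb_at_eq_0)
    then show ?thesis
      using sum_zero[of y] by simp
  qed
  finally show ?thesis .
qed

lemma comb_at_halves_zero: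
  assumes "n \<ge> 5"
    and sum_zero: "\<forall>x. (\<Sum>u\<in>Uset n. c1 u * tensor5 u x) + (\<Sum>u\<in>Uset n. c2 u * tensor5 (piv n u) x) = 0"
  shows "comb_at c1 id (Uset n) g = 0" and "comb_at c2 (piv n) (Uset n) g = 0"
proof -
  have comb_zero: "comb_at c1 id (Uset n) g + comb_at c2 (piv n) (Uset n) g = 0" for g
    using sum_zero[rule_format, of "tup g"] by (simp only: sum_tensor5_tup[where f = "piv n"] sum_tensor5_tup_id)
  show "comb_at c1 id (Uset n) g = 0"
    by (rule comb_at_first_half_zero[OF assms(1) comb_zero])
  then show "comb_at c2 (piv n) (Uset n) g = 0"
    using comb_zero[of g] by simp
qed

theorem proposition5p8:
  fixes n :: nat
  assumes "n \<ge> 5"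
  shows "(\<forall>c1 c2 :: (nat \<Rightarrow> real) \<Rightarrow> real.
            (\<forall>x. (\<Sum>u\<in>Uset n. c1 u * tensor5 u x + c2 u * tensor5 (piv n u) x) = 0)
            \<longrightarrow> (\<forall>u\<in>Uset n. c1 u = 0 \<and> c2 u = 0))
       \<and> (\<forall>c1 c2 :: (nat \<Rightarrow> real) \<Rightarrow> real.
            (\<forall>x. (\<Sum>u\<in>Uset n. c1 u * tensor5 u x) + (\<Sum>u\<in>Uset n. c2 u * tensor5 (piv n u) x) = 0)
            \<longrightarrow> (\<forall>x. (\<Sum>u\<in>Uset n. c1 u * tensor5 u x) = 0)
              \<and> (\<forall>x. (\<Sum>u\<in>Uset n. c2 u * tensor5 (piv n u) x) = 0))"
proof (intro conjI allI impI ballI)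
  fix c1 c2 :: "(nat \<Rightarrow> real) \<Rightarrow> real" and u
  assume "\<forall>x. (\<Sum>u\<in>Uset n. c1 u * tensor5 u x + c2 u * tensor5 (piv n u) x) = 0" and u: "u \<in> Uset n"
  then have "\<forall>x. (\<Sum>u\<in>Uset n. c1 u * tensor5 u x) + (\<Sum>u\<in>Uset n. c2 u * tensor5 (piv n u) x) = 0"
    by (simp add: sum.distrib)
  note halves = comb_at_halves_zero[OF assms this]
  show "c1 u = 0"
    by (rule coeffs_zero_if_comb_at_zero_first[OF assms halves(1) u])
  show "c2 u = 0"
    by (rule coeffs_zero_if_comb_at_zero_second[OF assms halves(2) u])
next
  fix c1 c2 :: "(nat \<Rightarrow> real) \<Rightarrow> real" and x
  assume "\<forall>x. (\<Sum>u\<in>Uset n. c1 u * tensor5 u x) + (\<Sum>u\<in>Uset n. c2 u * tensor5 (piv n u) x) = 0"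
  note halves = comb_at_halves_zero[OF assms this]
  obtain g where "x = tup g"
    using surj_tup by (metis surjD)
  then show "(\<Sum>u\<in>Uset n. c1 u * tensor5 u x) = 0" "(\<Sum>u\<in>Uset n. c2 u * tensor5 (piv n u) x) = 0"
    using halves by (simp_all only: sum_tensor5_tup[where f = "piv n"] sum_tensor5_tup_id)
qed

end
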